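(* Let $S,T$ be semirings, $G$ a $(T,S)$-bisemimodule, and let $0\to L\xrightarrow{f}M\xrightarrow{g}N$ be a sequence of left $T$-semimodules, with induced sequence of left $S$-semimodules $0\to\mathrm{Hom}_T(G,L)\xrightarrow{(G,f)}\mathrm{Hom}_T(G,M)\xrightarrow{(G,g)}\mathrm{Hom}_T(G,N)$, where $(G,f)(\varphi)=f\circ\varphi$ and $(G,g)(\psi)=g\circ\psi$. (1) If $0\to L\xrightarrow{f}M$ is exact (i.e. $f$ is injective) and $f$ is normal, then $0\to\mathrm{Hom}_T(G,L)\xrightarrow{(G,f)}\mathrm{Hom}_T(G,M)$ is exact (i.e. $(G,f)$ is injective) and $(G,f)$ is normal. (2) If $0\to L\xrightarrow{f}M\xrightarrow{g}N$ is semi-exact and $f$ is normal, then $0\to\mathrm{Hom}_T(G,L)\to\mathrm{Hom}_T(G,M)\to\mathrm{Hom}_T(G,N)$ is proper-exact (and hence semi-exact) and $(G,f)$ is normal. (3) If $0\to L\xrightarrow{f}M\xrightarrow{g}N$ is exact and $\mathrm{Hom}_T(G,-)$ preserves $k$-normal morphisms, then $0\to\mathrm{Hom}_T(G,L)\to\mathrm{Hom}_T(G,M)\to\mathrm{Hom}_T(G,N)$ is exact.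
   Context: A semiring $(S,+,0,\cdot,1)$ consists of a commutative monoid $(S,+,0)$ and a monoid $(S,\cdot,1)$ with $0\neq 1$, absorbing zero and both distributive laws; semimodules are as modules over rings without subtraction. $\mathrm{Hom}_T(G,X)$ is a left $S$-semimodule via pointwise addition and $(s\varphi)(x)=\varphi(xs)$. For a linear map $h:X\to Y$: $\mathrm{Ker}(h)=\{x\mid h(x)=0\}$; for $A\subseteq Y$, $\overline{A}=\{y\in Y\mid y+a=a'\text{ for some }a,a'\in A\}$; $h$ is $k$-normal if $h(x)=h(x')$ implies $x+k=x'+k'$ for some $k,k'\in\mathrm{Ker}(h)$; $h$ is $i$-normal if $h(X)=\overline{h(X)}$; $h$ is normal if both. A sequence $X\xrightarrow{u}Y\xrightarrow{v}Z$ is exact if $v$ is $k$-normal and $u(X)=\mathrm{Ker}(v)$; proper-exact if $u(X)=\mathrm{Ker}(v)$; semi-exact if $\overline{u(X)}=\mathrm{Ker}(v)$. A longer sequence is exact (resp. proper-exact, semi-exact) if each consecutive three-term piece is; a leading $0$ denotes the zero semimodule with the zero map. *)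

theory Defs
  imports Main
begin

record ('r, 'a) lsmod =
  mcarrier :: "'a set"
  madd :: "'a \<Rightarrow> 'a \<Rightarrow> 'a"
  mzero :: 'a
  msmult :: "'r \<Rightarrow> 'a \<Rightarrow> 'a"

definition left_semimodule :: "('r::semiring_1, 'a) lsmod \<Rightarrow> bool" where
  "left_semimodule X \<longleftrightarrow>
     mzero X \<in> mcarrier X \<and>
     (\<forall>x\<in>mcarrier X. \<forall>y\<in>mcarrier X. madd X x y \<in> mcarrier X) \<and>
     (\<forall>r. \<forall>x\<in>mcarrier X. msmult X r x \<in> mcarrier X) \<and>
     (\<forall>x\<in>mcarrier X. \<forall>y\<in>mcarrier X. \<forall>z\<in>mcarrier X.
        madd X (madd X x y) z = madd X x (madd X y z)) \<and>
     (\<forall>x\<in>mcarrier X. \<forall>y\<in>mcarrier X. madd X x y = madd X y x) \<and>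
     (\<forall>x\<in>mcarrier X. madd X (mzero X) x = x) \<and>
     (\<forall>r s. \<forall>x\<in>mcarrier X. msmult X (r * s) x = msmult X r (msmult X s x)) \<and>
     (\<forall>x\<in>mcarrier X. msmult X 1 x = x) \<and>
     (\<forall>r. \<forall>x\<in>mcarrier X. \<forall>y\<in>mcarrier X.
        msmult X r (madd X x y) = madd X (msmult X r x) (msmult X r y)) \<and>
     (\<forall>r s. \<forall>x\<in>mcarrier X. msmult X (r + s) x = madd X (msmult X r x) (msmult X s x)) \<and>
     (\<forall>x\<in>mcarrier X. msmult X 0 x = mzero X) \<and>
     (\<forall>r. msmult X r (mzero X) = mzero X)"

definition bisemimodule :: "('t::semiring_1, 'g) lsmod \<Rightarrow> ('g \<Rightarrow> 's::semiring_1 \<Rightarrow> 'g) \<Rightarrow> bool" where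
  "bisemimodule G rs \<longleftrightarrow>
     left_semimodule G \<and>
     (\<forall>s. \<forall>x\<in>mcarrier G. rs x s \<in> mcarrier G) \<and>
     (\<forall>s s'. \<forall>x\<in>mcarrier G. rs (rs x s) s' = rs x (s * s')) \<and>
     (\<forall>x\<in>mcarrier G. rs x 1 = x) \<and>
     (\<forall>s. \<forall>x\<in>mcarrier G. \<forall>y\<in>mcarrier G. rs (madd G x y) s = madd G (rs x s) (rs y s)) \<and>
     (\<forall>s s'. \<forall>x\<in>mcarrier G. rs x (s + s') = madd G (rs x s) (rs x s')) \<and>
     (\<forall>x\<in>mcarrier G. rs x 0 = mzero G) \<and>
     (\<forall>s. rs (mzero G) s = mzero G) \<and>
     (\<forall>t s. \<forall>x\<in>mcarrier G. rs (msmult G t x) s = msmult G t (rs x s))"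

definition linear_map :: "('r::semiring_1, 'a) lsmod \<Rightarrow> ('r, 'b) lsmod \<Rightarrow> ('a \<Rightarrow> 'b) \<Rightarrow> bool" where
  "linear_map X Y h \<longleftrightarrow>
     (\<forall>x\<in>mcarrier X. h x \<in> mcarrier Y) \<and>
     (\<forall>x\<in>mcarrier X. \<forall>y\<in>mcarrier X. h (madd X x y) = madd Y (h x) (h y)) \<and>
     (\<forall>r. \<forall>x\<in>mcarrier X. h (msmult X r x) = msmult Y r (h x))"

text \<open>Hom_T(G,X) as a left S-semimodule; maps are extensional (undefined off carrier G).\<close>

definition Hom_mod :: "('t::semiring_1, 'g) lsmod \<Rightarrow> ('g \<Rightarrow> 's::semiring_1 \<Rightarrow> 'g)
    \<Rightarrow> ('t, 'x) lsmod \<Rightarrow> ('s, 'g \<Rightarrow> 'x) lsmod" where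
  "Hom_mod G rs X =
     \<lparr> mcarrier = {\<phi>. linear_map G X \<phi> \<and> (\<forall>x. x \<notin> mcarrier G \<longrightarrow> \<phi> x = undefined)},
       madd = (\<lambda>\<phi> \<psi> x. if x \<in> mcarrier G then madd X (\<phi> x) (\<psi> x) else undefined),
       mzero = (\<lambda>x. if x \<in> mcarrier G then mzero X else undefined),
       msmult = (\<lambda>s \<phi> x. if x \<in> mcarrier G then \<phi> (rs x s) else undefined) \<rparr>"

definition Hom_map :: "('t, 'g) lsmod \<Rightarrow> ('x \<Rightarrow> 'y) \<Rightarrow> ('g \<Rightarrow> 'x) \<Rightarrow> ('g \<Rightarrow> 'y)" where
  "Hom_map G h = (\<lambda>\<phi> x. if x \<in> mcarrier G then h (\<phi> x) else undefined)"

definition Ker :: "('r, 'a) lsmod \<Rightarrow> ('r, 'b) lsmod \<Rightarrow> ('a \<Rightarrow> 'b) \<Rightarrow> 'a set" where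
  "Ker X Y h = {x \<in> mcarrier X. h x = mzero Y}"

definition sclosure :: "('r, 'a) lsmod \<Rightarrow> 'a set \<Rightarrow> 'a set" where
  "sclosure Y A = {y \<in> mcarrier Y. \<exists>a\<in>A. \<exists>a'\<in>A. madd Y y a = a'}"

definition k_normal :: "('r, 'a) lsmod \<Rightarrow> ('r, 'b) lsmod \<Rightarrow> ('a \<Rightarrow> 'b) \<Rightarrow> bool" where
  "k_normal X Y h \<longleftrightarrow>
     (\<forall>x\<in>mcarrier X. \<forall>x'\<in>mcarrier X. h x = h x' \<longrightarrow>
        (\<exists>k\<in>Ker X Y h. \<exists>k'\<in>Ker X Y h. madd X x k = madd X x' k'))"

definition i_normal :: "('r, 'a) lsmod \<Rightarrow> ('r, 'b) lsmod \<Rightarrow> ('a \<Rightarrow> 'b) \<Rightarrow> bool" where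
  "i_normal X Y h \<longleftrightarrow> h ` mcarrier X = sclosure Y (h ` mcarrier X)"

definition normal_map :: "('r, 'a) lsmod \<Rightarrow> ('r, 'b) lsmod \<Rightarrow> ('a \<Rightarrow> 'b) \<Rightarrow> bool" where
  "normal_map X Y h \<longleftrightarrow> k_normal X Y h \<and> i_normal X Y h"

definition exact3 :: "('r, 'a) lsmod \<Rightarrow> ('r, 'b) lsmod \<Rightarrow> ('r, 'c) lsmod
    \<Rightarrow> ('a \<Rightarrow> 'b) \<Rightarrow> ('b \<Rightarrow> 'c) \<Rightarrow> bool" where
  "exact3 X Y Z u v \<longleftrightarrow> k_normal Y Z v \<and> u ` mcarrier X = Ker Y Z v"

definition proper_exact3 :: "('r, 'a) lsmod \<Rightarrow> ('r, 'b) lsmod \<Rightarrow> ('r, 'c) lsmod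
    \<Rightarrow> ('a \<Rightarrow> 'b) \<Rightarrow> ('b \<Rightarrow> 'c) \<Rightarrow> bool" where
  "proper_exact3 X Y Z u v \<longleftrightarrow> u ` mcarrier X = Ker Y Z v"

definition semi_exact3 :: "('r, 'a) lsmod \<Rightarrow> ('r, 'b) lsmod \<Rightarrow> ('r, 'c) lsmod
    \<Rightarrow> ('a \<Rightarrow> 'b) \<Rightarrow> ('b \<Rightarrow> 'c) \<Rightarrow> bool" where
  "semi_exact3 X Y Z u v \<longleftrightarrow> sclosure Y (u ` mcarrier X) = Ker Y Z v"

definition zmod :: "('r, 'a) lsmod \<Rightarrow> ('r, 'a) lsmod" where
  "zmod X = \<lparr> mcarrier = {mzero X}, madd = (\<lambda>_ _. mzero X), mzero = mzero X,
              msmult = (\<lambda>_ _. mzero X) \<rparr>"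

definition zmap :: "('r, 'a) lsmod \<Rightarrow> 'a \<Rightarrow> 'a" where
  "zmap X = (\<lambda>_. mzero X)"

definition exact_0LM :: "('r, 'a) lsmod \<Rightarrow> ('r, 'b) lsmod \<Rightarrow> ('a \<Rightarrow> 'b) \<Rightarrow> bool" where
  "exact_0LM L M f \<longleftrightarrow> exact3 (zmod L) L M (zmap L) f"

definition exact_0LMN :: "('r, 'a) lsmod \<Rightarrow> ('r, 'b) lsmod \<Rightarrow> ('r, 'c) lsmod
    \<Rightarrow> ('a \<Rightarrow> 'b) \<Rightarrow> ('b \<Rightarrow> 'c) \<Rightarrow> bool" where
  "exact_0LMN L M N f g \<longleftrightarrow> exact3 (zmod L) L M (zmap L) f \<and> exact3 L M N f g"

definition proper_exact_0LMN :: "('r, 'a) lsmod \<Rightarrow> ('r, 'b) lsmod \<Rightarrow> ('r, 'c) lsmod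
    \<Rightarrow> ('a \<Rightarrow> 'b) \<Rightarrow> ('b \<Rightarrow> 'c) \<Rightarrow> bool" where
  "proper_exact_0LMN L M N f g \<longleftrightarrow>
     proper_exact3 (zmod L) L M (zmap L) f \<and> proper_exact3 L M N f g"

definition semi_exact_0LMN :: "('r, 'a) lsmod \<Rightarrow> ('r, 'b) lsmod \<Rightarrow> ('r, 'c) lsmod
    \<Rightarrow> ('a \<Rightarrow> 'b) \<Rightarrow> ('b \<Rightarrow> 'c) \<Rightarrow> bool" where
  "semi_exact_0LMN L M N f g \<longleftrightarrow>
     semi_exact3 (zmod L) L M (zmap L) f \<and> semi_exact3 L M N f g"

end

theory Submission
  imports Defs
begin

text \<open>Everything in Hom_T(G,-) is computed pointwise on G, since (G,f)\<phi> = f \<circ> \<phi>.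
  For semimodules, exactness of 0 \<rightarrow> L \<rightarrow> M just says that f is injective, and then so
  is (G,f). The key point is a lifting property: a T-linear \<psi> : G \<rightarrow> M with values in
  f(L) factors as f \<circ> \<phi> with \<phi> T-linear. Applied to \<psi> in the kernel of (G,g) this gives
  Im(G,f) = Ker(G,g) whenever Im f = Ker g, and applied to \<psi> in the closure of Im(G,f)
  (checked pointwise) it transfers i-normality from f to (G,f). Semi-exactness of the
  original sequence already gives Im f = Ker g once f is i-normal.\<close>

lemma left_semimodule_zero_closed: "left_semimodule X \<Longrightarrow> mzero X \<in> mcarrier X"
  by (simp add: left_semimodule_def)

lemma left_semimodule_add_closed:
  "left_semimodule X \<Longrightarrow> x \<in> mcarrier X \<Longrightarrow> y \<in> mcarrier X \<Longrightarrow> madd X x y \<in> mcarrier X"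
  by (simp add: left_semimodule_def)

lemma left_semimodule_add_assoc:
  "left_semimodule X \<Longrightarrow> x \<in> mcarrier X \<Longrightarrow> y \<in> mcarrier X \<Longrightarrow> z \<in> mcarrier X \<Longrightarrow>
    madd X (madd X x y) z = madd X x (madd X y z)"
  unfolding left_semimodule_def by blast

lemma left_semimodule_add_commute:
  "left_semimodule X \<Longrightarrow> x \<in> mcarrier X \<Longrightarrow> y \<in> mcarrier X \<Longrightarrow> madd X x y = madd X y x"
  unfolding left_semimodule_def by blast

lemma left_semimodule_add_zero_right:
  assumes "left_semimodule X" "x \<in> mcarrier X"
  shows "madd X x (mzero X) = x"
  using assms unfolding left_semimodule_def by metis

lemma left_semimodule_add_add_swap:
  assumes "left_semimodule X" "a \<in> mcarrier X" "b \<in> mcarrier X" "c \<in> mcarrier X" "d \<in> mcarrier X"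
  shows "madd X (madd X a b) (madd X c d) = madd X (madd X a c) (madd X b d)"
proof -
  note closed = left_semimodule_add_closed[OF assms(1)]
    and assoc = left_semimodule_add_assoc[OF assms(1)]
    and comm = left_semimodule_add_commute[OF assms(1)]
  have "madd X (madd X a b) (madd X c d) = madd X a (madd X (madd X b c) d)"
    using assms by (simp add: assoc closed)
  also have "\<dots> = madd X a (madd X (madd X c b) d)"
    using assms by (simp add: comm)
  also have "\<dots> = madd X (madd X a c) (madd X b d)"
    using assms by (simp add: assoc closed)
  finally show ?thesis .
qed

lemma linear_map_zero:
  assumes "left_semimodule X" "left_semimodule Y" "linear_map X Y h"
  shows "h (mzero X) = mzero Y"
proof -
  have zero: "mzero X \<in> mcarrier X" and "msmult X 0 (mzero X) = mzero X"
    using assms(1) by (simp_all add: left_semimodule_def)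
  then have "h (mzero X) = msmult Y 0 (h (mzero X))"
    using assms(3) unfolding linear_map_def by metis
  also have "\<dots> = mzero Y"
    using assms(2,3) zero by (simp add: left_semimodule_def linear_map_def)
  finally show ?thesis .
qed

lemma sclosure_zero: "left_semimodule X \<Longrightarrow> sclosure X {mzero X} = {mzero X}"
  using left_semimodule_add_zero_right left_semimodule_zero_closed
  unfolding sclosure_def by fastforce

lemma image_zmap_zmod [simp]: "zmap X ` mcarrier (zmod X) = {mzero X}"
  by (simp add: zmap_def zmod_def)

lemma exact_0LM_iff: "exact_0LM X Y h \<longleftrightarrow> k_normal X Y h \<and> Ker X Y h = {mzero X}"
  by (auto simp: exact_0LM_def exact3_def)

lemma proper_exact3_zero_iff:
  "proper_exact3 (zmod X) X Y (zmap X) h \<longleftrightarrow> Ker X Y h = {mzero X}"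
  by (auto simp: proper_exact3_def)

lemma semi_exact3_zero_iff:
  "left_semimodule X \<Longrightarrow> semi_exact3 (zmod X) X Y (zmap X) h \<longleftrightarrow> Ker X Y h = {mzero X}"
  by (auto simp: semi_exact3_def sclosure_zero)

lemma semi_exact3_iff_proper_exact3:
  "i_normal X Y u \<Longrightarrow> semi_exact3 X Y Z u v \<longleftrightarrow> proper_exact3 X Y Z u v"
  by (simp add: i_normal_def semi_exact3_def proper_exact3_def)

lemma exact_0LM_iff_inj_on:
  assumes X: "left_semimodule X" and Y: "left_semimodule Y" and h: "linear_map X Y h"
  shows "exact_0LM X Y h \<longleftrightarrow> inj_on h (mcarrier X)"
proof
  assume "exact_0LM X Y h"
  then have kn: "k_normal X Y h" and K: "Ker X Y h = {mzero X}"
    by (simp_all add: exact_0LM_iff)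
  show "inj_on h (mcarrier X)"
  proof (rule inj_onI)
    fix x x' assume x: "x \<in> mcarrier X" "x' \<in> mcarrier X" "h x = h x'"
    with kn obtain k k' where "k \<in> Ker X Y h" "k' \<in> Ker X Y h" "madd X x k = madd X x' k'"
      unfolding k_normal_def by blast
    with K x show "x = x'" using left_semimodule_add_zero_right[OF X] by auto
  qed
next
  assume inj: "inj_on h (mcarrier X)"
  have zero: "mzero X \<in> Ker X Y h"
    using linear_map_zero[OF X Y h] left_semimodule_zero_closed[OF X] by (simp add: Ker_def)
  then have "Ker X Y h = {mzero X}"
    using inj unfolding Ker_def by (auto intro: inj_onD)
  moreover have "k_normal X Y h"
    using zero inj unfolding k_normal_def by (auto dest: inj_onD)
  ultimately show "exact_0LM X Y h" by (simp add: exact_0LM_iff)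
qed

lemma i_normal_iff:
  assumes X: "left_semimodule X" and Y: "left_semimodule Y" and h: "linear_map X Y h"
  shows "i_normal X Y h \<longleftrightarrow> sclosure Y (h ` mcarrier X) \<subseteq> h ` mcarrier X"
proof -
  have "mzero Y \<in> h ` mcarrier X"
    using linear_map_zero[OF X Y h] left_semimodule_zero_closed[OF X] by (metis image_eqI)
  moreover have "h ` mcarrier X \<subseteq> mcarrier Y"
    using h by (auto simp: linear_map_def)
  ultimately have "h ` mcarrier X \<subseteq> sclosure Y (h ` mcarrier X)"
    using left_semimodule_add_zero_right[OF Y] unfolding sclosure_def by fastforce
  then show ?thesis by (auto simp: i_normal_def)
qed

lemma Hom_mod_carrier_iff:
  "\<phi> \<in> mcarrier (Hom_mod G rs X) \<longleftrightarrow>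
     linear_map G X \<phi> \<and> (\<forall>x. x \<notin> mcarrier G \<longrightarrow> \<phi> x = undefined)"
  by (simp add: Hom_mod_def)

lemma Hom_mod_apply [simp]:
  assumes "x \<in> mcarrier G"
  shows "madd (Hom_mod G rs X) \<phi> \<psi> x = madd X (\<phi> x) (\<psi> x)"
    and "mzero (Hom_mod G rs X) x = mzero X"
    and "msmult (Hom_mod G rs X) s \<phi> x = \<phi> (rs x s)"
    and "Hom_map G h \<phi> x = h (\<phi> x)"
  using assms by (simp_all add: Hom_mod_def Hom_map_def)

lemma Hom_mod_value_closed:
  "\<phi> \<in> mcarrier (Hom_mod G rs X) \<Longrightarrow> x \<in> mcarrier G \<Longrightarrow> \<phi> x \<in> mcarrier X"
  by (simp add: Hom_mod_def linear_map_def)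

lemma Hom_mod_eqI:
  assumes "\<phi> \<in> mcarrier (Hom_mod G rs X)" "\<psi> \<in> mcarrier (Hom_mod G rs X)"
    and "\<And>x. x \<in> mcarrier G \<Longrightarrow> \<phi> x = \<psi> x"
  shows "\<phi> = \<psi>"
  using assms unfolding Hom_mod_carrier_iff by (metis ext)

lemma Hom_mod_zero_closed:
  assumes "left_semimodule G" "left_semimodule X"
  shows "mzero (Hom_mod G rs X) \<in> mcarrier (Hom_mod G rs X)"
  using assms unfolding Hom_mod_carrier_iff linear_map_def left_semimodule_def
  by (auto simp: Hom_mod_def)

lemma Hom_mod_add_closed:
  assumes G: "left_semimodule G" and X: "left_semimodule X"
    and \<phi>: "\<phi> \<in> mcarrier (Hom_mod G rs X)" and \<psi>: "\<psi> \<in> mcarrier (Hom_mod G rs X)"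
  shows "madd (Hom_mod G rs X) \<phi> \<psi> \<in> mcarrier (Hom_mod G rs X)"
proof -
  let ?\<chi> = "madd (Hom_mod G rs X) \<phi> \<psi>"
  have lin: "linear_map G X \<phi>" "linear_map G X \<psi>"
    using \<phi> \<psi> by (simp_all add: Hom_mod_carrier_iff)
  have "linear_map G X ?\<chi>"
    unfolding linear_map_def
  proof (intro conjI ballI allI)
    fix x assume "x \<in> mcarrier G"
    then show "?\<chi> x \<in> mcarrier X"
      using lin X by (simp add: linear_map_def left_semimodule_def)
  next
    fix x y assume xy: "x \<in> mcarrier G" "y \<in> mcarrier G"
    then have "madd G x y \<in> mcarrier G" by (rule left_semimodule_add_closed[OF G])
    then show "?\<chi> (madd G x y) = madd X (?\<chi> x) (?\<chi> y)"
      using xy lin left_semimodule_add_add_swap[OF X] by (simp add: linear_map_def)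
  next
    fix r x assume x: "x \<in> mcarrier G"
    then have "msmult G r x \<in> mcarrier G" using G by (simp add: left_semimodule_def)
    then show "?\<chi> (msmult G r x) = msmult X r (?\<chi> x)"
      using x lin X by (simp add: linear_map_def left_semimodule_def)
  qed
  then show ?thesis by (simp add: Hom_mod_carrier_iff) (simp add: Hom_mod_def)
qed

text \<open>This is where the right S-action on G is used: s\<phi> = \<phi>(- s) is T-linear
  because the two actions on G commute.\<close>

lemma Hom_mod_smult_closed:
  assumes "bisemimodule G rs" "\<phi> \<in> mcarrier (Hom_mod G rs X)"
  shows "msmult (Hom_mod G rs X) s \<phi> \<in> mcarrier (Hom_mod G rs X)"
  using assms
  unfolding Hom_mod_carrier_iff linear_map_def bisemimodule_def left_semimodule_def
  by (auto simp: Hom_mod_def)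

lemma left_semimodule_Hom_mod:
  assumes G: "bisemimodule G rs" and X: "left_semimodule X"
  shows "left_semimodule (Hom_mod G rs X)"
proof -
  have G_mod: "left_semimodule G" using G by (simp add: bisemimodule_def)
  have lin: "linear_map G X \<phi>" if "\<phi> \<in> mcarrier (Hom_mod G rs X)" for \<phi>
    using that by (simp add: Hom_mod_carrier_iff)
  have rs_closed: "rs x s \<in> mcarrier G" if "x \<in> mcarrier G" for x s
    using G that by (simp add: bisemimodule_def)
  have rs_laws: "rs (rs x r) s = rs x (r * s)" "rs x 1 = x"
    "rs x (r + s) = madd G (rs x r) (rs x s)" "rs x 0 = mzero G" if "x \<in> mcarrier G" for x r s
    using G that by (simp_all add: bisemimodule_def)
  note closed = Hom_mod_zero_closed[OF G_mod X] Hom_mod_add_closed[OF G_mod X]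
    Hom_mod_smult_closed[OF G]
  show ?thesis
    unfolding left_semimodule_def
  proof (intro conjI ballI allI)
    show "mzero (Hom_mod G rs X) \<in> mcarrier (Hom_mod G rs X)" by (rule closed(1))
  qed (auto intro!: Hom_mod_eqI closed simp: rs_closed rs_laws Hom_mod_value_closed
        linear_map_zero[OF G_mod X lin],
      (metis X[unfolded left_semimodule_def] lin[unfolded linear_map_def]
        Hom_mod_value_closed rs_closed)+)
qed

lemma Hom_map_closed:
  assumes "left_semimodule G" "linear_map L M f" "\<phi> \<in> mcarrier (Hom_mod G rs L)"
  shows "Hom_map G f \<phi> \<in> mcarrier (Hom_mod G rs M)"
  using assms unfolding Hom_mod_carrier_iff linear_map_def left_semimodule_def
  by (auto simp: Hom_map_def)

lemma linear_map_Hom_map: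
  assumes G: "bisemimodule G rs" and f: "linear_map L M f"
  shows "linear_map (Hom_mod G rs L) (Hom_mod G rs M) (Hom_map G f)"
  unfolding linear_map_def
proof (intro conjI ballI allI)
  fix \<phi> assume \<phi>: "\<phi> \<in> mcarrier (Hom_mod G rs L)"
  show "Hom_map G f \<phi> \<in> mcarrier (Hom_mod G rs M)"
    using G f \<phi> by (simp add: Hom_map_closed bisemimodule_def)
  fix s
  show "Hom_map G f (msmult (Hom_mod G rs L) s \<phi>) = msmult (Hom_mod G rs M) s (Hom_map G f \<phi>)"
    using G by (auto simp: Hom_map_def Hom_mod_def bisemimodule_def)
next
  fix \<phi> \<psi> assume "\<phi> \<in> mcarrier (Hom_mod G rs L)" "\<psi> \<in> mcarrier (Hom_mod G rs L)"
  then show "Hom_map G f (madd (Hom_mod G rs L) \<phi> \<psi>) =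
      madd (Hom_mod G rs M) (Hom_map G f \<phi>) (Hom_map G f \<psi>)"
    using f Hom_mod_value_closed by (fastforce simp: Hom_map_def Hom_mod_def linear_map_def)
qed

lemma inj_on_Hom_map:
  assumes "inj_on f (mcarrier L)"
  shows "inj_on (Hom_map G f) (mcarrier (Hom_mod G rs L))"
proof (rule inj_onI)
  fix \<phi> \<psi> assume \<phi>: "\<phi> \<in> mcarrier (Hom_mod G rs L)" and \<psi>: "\<psi> \<in> mcarrier (Hom_mod G rs L)"
    and eq: "Hom_map G f \<phi> = Hom_map G f \<psi>"
  show "\<phi> = \<psi>"
  proof (rule Hom_mod_eqI[OF \<phi> \<psi>])
    fix x assume x: "x \<in> mcarrier G"
    then have "f (\<phi> x) = f (\<psi> x)" using fun_cong[OF eq, of x] by simp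
    with assms show "\<phi> x = \<psi> x"
      using Hom_mod_value_closed[OF \<phi> x] Hom_mod_value_closed[OF \<psi> x] by (auto dest: inj_onD)
  qed
qed

text \<open>Pointwise lifting along f: the lift the_inv_into \<circ> \<psi> is T-linear because f is
  injective and linear.\<close>

lemma image_Hom_map_iff:
  assumes G: "left_semimodule G" and L: "left_semimodule L"
    and f: "linear_map L M f" and inj: "inj_on f (mcarrier L)"
  shows "\<psi> \<in> Hom_map G f ` mcarrier (Hom_mod G rs L) \<longleftrightarrow>
    \<psi> \<in> mcarrier (Hom_mod G rs M) \<and> (\<forall>x\<in>mcarrier G. \<psi> x \<in> f ` mcarrier L)"
proof
  assume "\<psi> \<in> Hom_map G f ` mcarrier (Hom_mod G rs L)"
  then show "\<psi> \<in> mcarrier (Hom_mod G rs M) \<and> (\<forall>x\<in>mcarrier G. \<psi> x \<in> f ` mcarrier L)"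
    using Hom_map_closed[OF G f] Hom_mod_value_closed by fastforce
next
  assume "\<psi> \<in> mcarrier (Hom_mod G rs M) \<and> (\<forall>x\<in>mcarrier G. \<psi> x \<in> f ` mcarrier L)"
  then have \<psi>: "linear_map G M \<psi>" "\<And>x. x \<notin> mcarrier G \<Longrightarrow> \<psi> x = undefined"
    and im: "\<forall>x\<in>mcarrier G. \<psi> x \<in> f ` mcarrier L"
    by (simp_all add: Hom_mod_carrier_iff)
  define \<phi> where
    "\<phi> x = (if x \<in> mcarrier G then the_inv_into (mcarrier L) f (\<psi> x) else undefined)" for x
  have f\<phi>: "f (\<phi> x) = \<psi> x" if "x \<in> mcarrier G" for x
    using that im inj by (simp add: \<phi>_def f_the_inv_into_f)
  have \<phi>L: "\<phi> x \<in> mcarrier L" if "x \<in> mcarrier G" for x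
    using that im inj by (auto simp: \<phi>_def the_inv_into_into)
  have f_cancel: "a = b" if "a \<in> mcarrier L" "b \<in> mcarrier L" "f a = f b" for a b
    using inj_onD[OF inj that(3) that(1,2)] .
  have "linear_map G L \<phi>"
    unfolding linear_map_def
  proof (intro conjI ballI allI)
    fix x assume "x \<in> mcarrier G"
    then show "\<phi> x \<in> mcarrier L" by (rule \<phi>L)
  next
    fix x y assume xy: "x \<in> mcarrier G" "y \<in> mcarrier G"
    then have "madd G x y \<in> mcarrier G" by (rule left_semimodule_add_closed[OF G])
    then show "\<phi> (madd G x y) = madd L (\<phi> x) (\<phi> y)"
      using xy f\<phi> \<phi>L \<psi>(1) f left_semimodule_add_closed[OF L]
      by (intro f_cancel) (auto simp: linear_map_def)
  next
    fix r x assume x: "x \<in> mcarrier G"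
    then have "msmult G r x \<in> mcarrier G" using G by (simp add: left_semimodule_def)
    then show "\<phi> (msmult G r x) = msmult L r (\<phi> x)"
      using x f\<phi> \<phi>L \<psi>(1) f L by (intro f_cancel) (auto simp: linear_map_def left_semimodule_def)
  qed
  then have "\<phi> \<in> mcarrier (Hom_mod G rs L)"
    by (simp add: Hom_mod_carrier_iff \<phi>_def)
  moreover have "Hom_map G f \<phi> = \<psi>"
    using f\<phi> \<psi>(2) by (auto simp: Hom_map_def)
  ultimately show "\<psi> \<in> Hom_map G f ` mcarrier (Hom_mod G rs L)" by blast
qed

lemma Ker_Hom_map:
  "Ker (Hom_mod G rs M) (Hom_mod G rs N) (Hom_map G g) =
    {\<psi> \<in> mcarrier (Hom_mod G rs M). \<forall>x\<in>mcarrier G. \<psi> x \<in> Ker M N g}"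
  by (auto simp: Ker_def Hom_map_def Hom_mod_def linear_map_def fun_eq_iff)

lemma image_Hom_map_eq_Ker_Hom_map:
  assumes "left_semimodule G" "left_semimodule L" "linear_map L M f" "inj_on f (mcarrier L)"
    and "f ` mcarrier L = Ker M N g"
  shows "Hom_map G f ` mcarrier (Hom_mod G rs L) = Ker (Hom_mod G rs M) (Hom_mod G rs N) (Hom_map G g)"
  using image_Hom_map_iff[OF assms(1-4)] assms(5) by (auto simp: Ker_Hom_map)

lemma i_normal_Hom_map:
  assumes G: "bisemimodule G rs" and L: "left_semimodule L" and M: "left_semimodule M"
    and f: "linear_map L M f" and inj: "inj_on f (mcarrier L)" and f_i_normal: "i_normal L M f"
  shows "i_normal (Hom_mod G rs L) (Hom_mod G rs M) (Hom_map G f)"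
proof -
  have G_mod: "left_semimodule G" using G by (simp add: bisemimodule_def)
  have "\<psi> \<in> Hom_map G f ` mcarrier (Hom_mod G rs L)"
    if \<psi>: "\<psi> \<in> sclosure (Hom_mod G rs M) (Hom_map G f ` mcarrier (Hom_mod G rs L))" for \<psi>
  proof -
    from \<psi> obtain \<phi>\<^sub>1 \<phi>\<^sub>2 where \<psi>_Hom: "\<psi> \<in> mcarrier (Hom_mod G rs M)"
      and \<phi>: "\<phi>\<^sub>1 \<in> mcarrier (Hom_mod G rs L)" "\<phi>\<^sub>2 \<in> mcarrier (Hom_mod G rs L)"
      and eq: "madd (Hom_mod G rs M) \<psi> (Hom_map G f \<phi>\<^sub>1) = Hom_map G f \<phi>\<^sub>2"
      unfolding sclosure_def by blast
    have "\<psi> x \<in> sclosure M (f ` mcarrier L)" if x: "x \<in> mcarrier G" for x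
      using fun_cong[OF eq, of x] x Hom_mod_value_closed[OF \<psi>_Hom x]
        Hom_mod_value_closed[OF \<phi>(1) x] Hom_mod_value_closed[OF \<phi>(2) x]
      unfolding sclosure_def by auto
    then show ?thesis
      using f_i_normal \<psi>_Hom image_Hom_map_iff[OF G_mod L f inj, where rs = rs]
      by (simp add: i_normal_def)
  qed
  then show ?thesis
    using i_normal_iff[OF left_semimodule_Hom_mod[OF G L] left_semimodule_Hom_mod[OF G M]
        linear_map_Hom_map[OF G f]] by blast
qed

lemma exact_0LM_Hom_map:
  assumes G: "bisemimodule G rs" and L: "left_semimodule L" and M: "left_semimodule M"
    and f: "linear_map L M f" and exact: "exact_0LM L M f"
  shows "exact_0LM (Hom_mod G rs L) (Hom_mod G rs M) (Hom_map G f)"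
  using exact inj_on_Hom_map
  by (simp add: exact_0LM_iff_inj_on[OF L M f] exact_0LM_iff_inj_on[OF left_semimodule_Hom_mod[OF G L]
        left_semimodule_Hom_mod[OF G M] linear_map_Hom_map[OF G f]])

theorem mainTheorem5:
  fixes G :: "('t::semiring_1, 'g) lsmod"
    and rs :: "'g \<Rightarrow> 's::semiring_1 \<Rightarrow> 'g"
    and L :: "('t, 'l) lsmod" and M :: "('t, 'm) lsmod" and N :: "('t, 'n) lsmod"
    and f :: "'l \<Rightarrow> 'm" and g :: "'m \<Rightarrow> 'n"
  assumes "bisemimodule G rs"
    and "left_semimodule L" and "left_semimodule M" and "left_semimodule N"
    and "linear_map L M f" and "linear_map M N g"
  shows
    "(exact_0LM L M f \<and> normal_map L M f \<longrightarrow>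
        exact_0LM (Hom_mod G rs L) (Hom_mod G rs M) (Hom_map G f) \<and>
        normal_map (Hom_mod G rs L) (Hom_mod G rs M) (Hom_map G f)) \<and>
     (semi_exact_0LMN L M N f g \<and> normal_map L M f \<longrightarrow>
        proper_exact_0LMN (Hom_mod G rs L) (Hom_mod G rs M) (Hom_mod G rs N)
          (Hom_map G f) (Hom_map G g) \<and>
        semi_exact_0LMN (Hom_mod G rs L) (Hom_mod G rs M) (Hom_mod G rs N)
          (Hom_map G f) (Hom_map G g) \<and>
        normal_map (Hom_mod G rs L) (Hom_mod G rs M) (Hom_map G f)) \<and>
     (exact_0LMN L M N f g \<and>
      (\<forall>(X :: ('t, 'm) lsmod) (Y :: ('t, 'n) lsmod) (h :: 'm \<Rightarrow> 'n).
         left_semimodule X \<and> left_semimodule Y \<and> linear_map X Y h \<and> k_normal X Y h \<longrightarrow>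
         k_normal (Hom_mod G rs X) (Hom_mod G rs Y) (Hom_map G h)) \<longrightarrow>
        exact_0LMN (Hom_mod G rs L) (Hom_mod G rs M) (Hom_mod G rs N)
          (Hom_map G f) (Hom_map G g))"
proof -
  note G = assms(1) and L = assms(2) and M = assms(3) and N = assms(4) and f = assms(5)
  let ?HL = "Hom_mod G rs L" and ?HM = "Hom_mod G rs M" and ?HN = "Hom_mod G rs N"
  have G_mod: "left_semimodule G" using G by (simp add: bisemimodule_def)
  have HL: "left_semimodule ?HL" by (rule left_semimodule_Hom_mod[OF G L])
  have inj: "inj_on f (mcarrier L)" if "exact_0LM L M f"
    using that exact_0LM_iff_inj_on[OF L M f] by blast
  have Hom_normal: "normal_map ?HL ?HM (Hom_map G f)" if "exact_0LM L M f" "i_normal L M f"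
    using exact_0LM_Hom_map[OF G L M f that(1)] i_normal_Hom_map[OF G L M f inj[OF that(1)] that(2)]
    by (simp add: normal_map_def exact_0LM_iff)
  have Hom_image: "Hom_map G f ` mcarrier ?HL = Ker ?HM ?HN (Hom_map G g)"
    if "exact_0LM L M f" "f ` mcarrier L = Ker M N g"
    using image_Hom_map_eq_Ker_Hom_map[OF G_mod L f inj[OF that(1)] that(2)] by blast
  show ?thesis
  proof (intro conjI[OF impI conjI[OF impI impI]])
    assume "exact_0LM L M f \<and> normal_map L M f"
    then show "exact_0LM ?HL ?HM (Hom_map G f) \<and> normal_map ?HL ?HM (Hom_map G f)"
      using exact_0LM_Hom_map[OF G L M f] Hom_normal by (simp add: normal_map_def)
  next
    assume semi: "semi_exact_0LMN L M N f g \<and> normal_map L M f"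
    then have exact: "exact_0LM L M f" and f_i_normal: "i_normal L M f"
      by (simp_all add: semi_exact_0LMN_def semi_exact3_zero_iff[OF L] normal_map_def exact_0LM_iff)
    moreover have "f ` mcarrier L = Ker M N g"
      using semi semi_exact3_iff_proper_exact3[OF f_i_normal]
      by (auto simp: semi_exact_0LMN_def proper_exact3_def)
    ultimately
    show "proper_exact_0LMN ?HL ?HM ?HN (Hom_map G f) (Hom_map G g) \<and>
        semi_exact_0LMN ?HL ?HM ?HN (Hom_map G f) (Hom_map G g) \<and>
        normal_map ?HL ?HM (Hom_map G f)"
      using exact_0LM_Hom_map[OF G L M f exact] Hom_normal Hom_image
      by (auto simp: proper_exact_0LMN_def semi_exact_0LMN_def proper_exact3_zero_iff
          semi_exact3_zero_iff[OF HL] exact_0LM_iff normal_map_def semi_exact3_iff_proper_exact3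
          proper_exact3_def)
  next
    assume "exact_0LMN L M N f g \<and>
      (\<forall>(X :: ('t, 'm) lsmod) (Y :: ('t, 'n) lsmod) (h :: 'm \<Rightarrow> 'n).
         left_semimodule X \<and> left_semimodule Y \<and> linear_map X Y h \<and> k_normal X Y h \<longrightarrow>
         k_normal (Hom_mod G rs X) (Hom_mod G rs Y) (Hom_map G h))"
    then show "exact_0LMN ?HL ?HM ?HN (Hom_map G f) (Hom_map G g)"
      using exact_0LM_Hom_map[OF G L M f] Hom_image M N assms(6)
      by (auto simp: exact_0LMN_def exact_0LM_def exact3_def)
  qed
qed

end
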